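(* Let $n\ge2$ and $\Delta\subset B_n$ a proper ideal. Then for all $0\le i\le\lfloor\frac{n-1}{2}\rfloor$, $$g_i(\mathrm{Bier}(B_n,\Delta))=f_i(\Delta)-f_{n-i}(\Delta).$$
   Context: $B_n$ is the Boolean lattice of subsets of $[1,n]$. A proper ideal $\Delta\subset B_n$ is a nonempty family of subsets of $[1,n]$ closed under taking subsets with $[1,n]\notin\Delta$; $f_i(\Delta)$ is the number of sets of cardinality $i$ in $\Delta$. The Bier sphere $\mathrm{Bier}(B_n,\Delta)$ is the simplicial complex whose faces are the pairs $(B,C)$ with $B\subsetneq C\subseteq[1,n]$, $B\in\Delta$, $C\notin\Delta$, with $(B',C')$ a face of $(B,C)$ iff $B'\subseteq B$ and $C\subseteq C'$; the face $(B,C)$ has $|B|+n-|C|$ vertices, and all facets have $n-1$ vertices. For such a complex $\Gamma$, $f_j(\Gamma)$ is the number of faces with $j$ vertices ($f_0=1$), $h_i(\Gamma):=\sum_{j=0}^{n-1}(-1)^{i+j}\binom{n-1-j}{n-1-i}f_j(\Gamma)$ for $0\le i\le n-1$ ($h_i:=0$ otherwise), and $g_i(\Gamma):=h_i(\Gamma)-h_{i-1}(\Gamma)$ for $0\le i\le\lfloor\frac{n-1}2\rfloor$. *)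

theory Defs
  imports Main
begin

definition proper_ideal :: "nat \<Rightarrow> nat set set \<Rightarrow> bool" where
  "proper_ideal n \<Delta> \<longleftrightarrow> \<Delta> \<subseteq> Pow {1..n} \<and> \<Delta> \<noteq> {} \<and>
     (\<forall>A\<in>\<Delta>. \<forall>B. B \<subseteq> A \<longrightarrow> B \<in> \<Delta>) \<and> {1..n} \<notin> \<Delta>"

definition ideal_f :: "nat set set \<Rightarrow> nat \<Rightarrow> nat" where
  "ideal_f \<Delta> i = card {A \<in> \<Delta>. card A = i}"

definition bier_faces :: "nat \<Rightarrow> nat set set \<Rightarrow> (nat set \<times> nat set) set" where
  "bier_faces n \<Delta> = {(B, C). B \<subset> C \<and> C \<subseteq> {1..n} \<and> B \<in> \<Delta> \<and> C \<notin> \<Delta>}"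

definition bier_nverts :: "nat \<Rightarrow> nat set \<times> nat set \<Rightarrow> nat" where
  "bier_nverts n F = card (fst F) + n - card (snd F)"

definition bier_f :: "nat \<Rightarrow> nat set set \<Rightarrow> nat \<Rightarrow> nat" where
  "bier_f n \<Delta> j = card {F \<in> bier_faces n \<Delta>. bier_nverts n F = j}"

definition bier_h :: "nat \<Rightarrow> nat set set \<Rightarrow> nat \<Rightarrow> int" where
  "bier_h n \<Delta> i = (if i \<le> n - 1 then
     (\<Sum>j=0..n-1. (-1) ^ (i + j) * int ((n - 1 - j) choose (n - 1 - i)) * int (bier_f n \<Delta> j))
   else 0)"

definition bier_g :: "nat \<Rightarrow> nat set set \<Rightarrow> nat \<Rightarrow> int" where
  "bier_g n \<Delta> i = bier_h n \<Delta> i - (if i = 0 then 0 else bier_h n \<Delta> (i - 1))"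

end

theory Submission
  imports Defs "HOL-Computational_Algebra.Polynomial"
begin

(* Let h(x) = sum_j f_j (x - 1)^(n-1-j), so that h_i is the coefficient of x^(n-1-i) in h(x) and
   g_i is the coefficient of x^(n-i) in (x - 1) h(x). Expanded over the faces, (x - 1) h(x) is the
   sum of (x - 1)^|C - B| over the pairs B in Delta, C not in Delta, B a subset of C. Summed over all
   C containing B, the inner sum would be x^(n - |B|); since Delta is down-closed, the excess pairs
   with C in Delta, summed over all B inside C, contribute x^|C|. Hence
   (x - 1) h(x) = sum_{B in Delta} x^(n - |B|) - sum_{C in Delta} x^|C|,
   whose coefficient of x^(n-i) is f_i(Delta) - f_(n-i)(Delta). *)

lemma coeff_linear_poly_power_general:
  fixes a b :: "'a :: comm_semiring_1"
  shows "coeff ([:a, b:] ^ m) k = of_nat (m choose k) * b ^ k * a ^ (m - k)"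
proof (cases "k \<le> m")
  case True
  then show ?thesis by (rule coeff_linear_poly_power)
next
  case False
  have "degree ([:a, b:] ^ m) \<le> degree [:a, b:] * m"
    by (rule degree_power_le)
  also have "\<dots> \<le> m"
    by simp
  finally have "degree ([:a, b:] ^ m) \<le> m" .
  with False show ?thesis by (simp add: coeff_eq_0 binomial_eq_0)
qed

lemma sum_Pow_power_card:
  fixes y :: "'a :: comm_semiring_1"
  assumes "finite A"
  shows "(\<Sum>X\<in>Pow A. y ^ card X) = (y + 1) ^ card A"
  using prod_add[OF assms, of "\<lambda>_. y" "\<lambda>_. 1"] by simp

lemma sum_Pow_power_card_Diff:
  fixes y :: "'a :: comm_semiring_1"
  assumes "finite A"
  shows "(\<Sum>X\<in>Pow A. y ^ card (A - X)) = (y + 1) ^ card A"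
  using prod_add[OF assms, of "\<lambda>_. 1" "\<lambda>_. y"] by (simp add: add.commute)

lemma sum_supersets_power_card_Diff:
  fixes y :: "'a :: comm_semiring_1"
  assumes "finite S" "B \<subseteq> S"
  shows "(\<Sum>C | B \<subseteq> C \<and> C \<subseteq> S. y ^ card (C - B)) = (y + 1) ^ card (S - B)"
proof -
  have "(\<Sum>C | B \<subseteq> C \<and> C \<subseteq> S. y ^ card (C - B)) = (\<Sum>X\<in>Pow (S - B). y ^ card X)"
    by (rule sum.reindex_bij_witness[where i="\<lambda>X. B \<union> X" and j="\<lambda>C. C - B"]) (use assms in auto)
  also have "\<dots> = (y + 1) ^ card (S - B)"
    using assms by (intro sum_Pow_power_card) auto
  finally show ?thesis .
qed

lemma sum_pairs_across_down_closed:
  fixes y :: "'a :: comm_ring_1"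
  assumes S: "finite S" and \<Delta>: "\<Delta> \<subseteq> Pow S"
    and down_closed: "\<And>A B. A \<in> \<Delta> \<Longrightarrow> B \<subseteq> A \<Longrightarrow> B \<in> \<Delta>"
  shows "(\<Sum>B\<in>\<Delta>. \<Sum>C \<in> {C. B \<subseteq> C \<and> C \<subseteq> S} - \<Delta>. y ^ card (C - B))
    = (\<Sum>B\<in>\<Delta>. (y + 1) ^ card (S - B)) - (\<Sum>C\<in>\<Delta>. (y + 1) ^ card C)"
proof -
  let ?up = "\<lambda>B. {C. B \<subseteq> C \<and> C \<subseteq> S}"
  have fin_\<Delta>: "finite \<Delta>"
    using S \<Delta> finite_subset by auto
  have fin_up: "finite (?up B)" for B
    using S by (auto intro: finite_subset[of _ "Pow S"])
  have split: "(\<Sum>C \<in> ?up B - \<Delta>. y ^ card (C - B))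
      = (\<Sum>C \<in> ?up B. y ^ card (C - B)) - (\<Sum>C \<in> {C\<in>\<Delta>. B \<subseteq> C}. y ^ card (C - B))" for B
  proof -
    have "{C\<in>\<Delta>. B \<subseteq> C} = ?up B \<inter> \<Delta>" and "?up B - \<Delta> = ?up B - ?up B \<inter> \<Delta>"
      using \<Delta> by auto
    then show ?thesis
      by (simp add: sum_diff[OF fin_up])
  qed
  have above: "(\<Sum>B\<in>\<Delta>. \<Sum>C \<in> ?up B. y ^ card (C - B)) = (\<Sum>B\<in>\<Delta>. (y + 1) ^ card (S - B))"
    using S \<Delta> by (intro sum.cong refl sum_supersets_power_card_Diff) auto
  have "(\<Sum>B\<in>\<Delta>. \<Sum>C \<in> {C\<in>\<Delta>. B \<subseteq> C}. y ^ card (C - B))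
      = (\<Sum>C\<in>\<Delta>. \<Sum>B \<in> {B\<in>\<Delta>. B \<subseteq> C}. y ^ card (C - B))"
    by (rule sum.swap_restrict[OF fin_\<Delta> fin_\<Delta>])
  also have "\<dots> = (\<Sum>C\<in>\<Delta>. (y + 1) ^ card C)"
  proof (rule sum.cong)
    fix C assume "C \<in> \<Delta>"
    then have "{B\<in>\<Delta>. B \<subseteq> C} = Pow C" and "finite C"
      using down_closed \<Delta> S by (auto intro: rev_finite_subset)
    then show "(\<Sum>B \<in> {B\<in>\<Delta>. B \<subseteq> C}. y ^ card (C - B)) = (y + 1) ^ card C"
      by (simp add: sum_Pow_power_card_Diff)
  qed simp
  finally show ?thesis
    by (simp add: split sum_subtractf above)
qed

lemma coeff_sum_smult_shifted_powers:
  fixes f :: "nat \<Rightarrow> 'a :: comm_ring_1"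
  shows "coeff (\<Sum>j=0..d. smult (f j) ([:-1, 1:] ^ (d - j))) k
    = (\<Sum>j=0..d. f j * of_nat ((d - j) choose k) * (-1) ^ (d - j - k))"
  by (simp add: coeff_sum coeff_linear_poly_power_general mult.assoc)

lemma coeff_sum_smult_shifted_powers_at_diff:
  fixes f :: "nat \<Rightarrow> 'a :: comm_ring_1"
  assumes "i \<le> d"
  shows "coeff (\<Sum>j=0..d. smult (f j) ([:-1, 1:] ^ (d - j))) (d - i)
    = (\<Sum>j=0..d. (-1) ^ (i + j) * of_nat ((d - j) choose (d - i)) * f j)"
  unfolding coeff_sum_smult_shifted_powers
proof (rule sum.cong)
  fix j assume "j \<in> {0..d}"
  show "f j * of_nat ((d - j) choose (d - i)) * (-1) ^ (d - j - (d - i))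
      = (-1) ^ (i + j) * of_nat ((d - j) choose (d - i)) * f j"
  proof (cases "j \<le> i")
    case True
    then have "i + j = (i - j) + 2 * j" and "d - j - (d - i) = i - j"
      using assms by auto
    then have "(-1::'a) ^ (i + j) = (-1) ^ (d - j - (d - i))"
      by (simp only: power_add power_mult) simp
    then show ?thesis
      by simp
  next
    case False
    then have "d - j < d - i"
      using assms \<open>j \<in> {0..d}\<close> by auto
    then show ?thesis
      by (simp add: binomial_eq_0)
  qed
qed simp

lemma coeff_sum_smult_shifted_powers_eq_0:
  fixes f :: "nat \<Rightarrow> 'a :: comm_ring_1"
  assumes "d < k"
  shows "coeff (\<Sum>j=0..d. smult (f j) ([:-1, 1:] ^ (d - j))) k = 0"
  unfolding coeff_sum_smult_shifted_powers using assms
  by (intro sum.neutral) (simp add: binomial_eq_0)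

definition bier_h_poly :: "nat \<Rightarrow> nat set set \<Rightarrow> int poly" where
  "bier_h_poly n \<Delta> = (\<Sum>j=0..n-1. smult (int (bier_f n \<Delta> j)) ([:-1, 1:] ^ (n - 1 - j)))"

lemma bier_h_eq_coeff:
  assumes "i \<le> n - 1"
  shows "bier_h n \<Delta> i = coeff (bier_h_poly n \<Delta>) (n - 1 - i)"
  using assms unfolding bier_h_def bier_h_poly_def
  by (simp only: coeff_sum_smult_shifted_powers_at_diff) simp

lemma bier_g_eq_coeff:
  assumes "1 \<le> n" "i \<le> n - 1"
  shows "bier_g n \<Delta> i = coeff ([:-1, 1:] * bier_h_poly n \<Delta>) (n - i)"
proof -
  have "n - i = Suc (n - 1 - i)"
    using assms by simp
  then have "coeff ([:-1, 1:] * bier_h_poly n \<Delta>) (n - i)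
      = coeff (bier_h_poly n \<Delta>) (n - 1 - i) - coeff (bier_h_poly n \<Delta>) (n - i)"
    by simp
  moreover have "coeff (bier_h_poly n \<Delta>) n = 0"
    using assms unfolding bier_h_poly_def
    by (intro coeff_sum_smult_shifted_powers_eq_0) simp
  moreover have "n - i = n - 1 - (i - 1)" if "i \<noteq> 0"
    using assms that by simp
  ultimately show ?thesis
    using assms unfolding bier_g_def by (simp add: bier_h_eq_coeff)
qed

lemma bier_face_card:
  assumes "F \<in> bier_faces n \<Delta>"
  shows "card (fst F) < card (snd F)" and "card (snd F) \<le> n"
proof -
  obtain B C where F: "F = (B, C)" "B \<subset> C" "C \<subseteq> {1..n}"
    using assms unfolding bier_faces_def by auto
  then have "finite C"
    by (auto intro: rev_finite_subset)
  then show "card (fst F) < card (snd F)" and "card (snd F) \<le> n"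
    using F psubset_card_mono card_mono[of "{1..n}" C] by auto
qed

lemma finite_bier_faces: "finite (bier_faces n \<Delta>)"
  by (rule finite_subset[of _ "Pow {1..n} \<times> Pow {1..n}"]) (auto simp: bier_faces_def)

lemma bier_faces_eq_Sigma:
  assumes "\<Delta> \<subseteq> Pow {1..n}"
  shows "bier_faces n \<Delta> = Sigma \<Delta> (\<lambda>B. {C. B \<subseteq> C \<and> C \<subseteq> {1..n}} - \<Delta>)"
  using assms unfolding bier_faces_def by auto

lemma bier_h_poly_eq_sum_faces:
  "bier_h_poly n \<Delta> = (\<Sum>F\<in>bier_faces n \<Delta>. [:-1, 1:] ^ (n - 1 - bier_nverts n F) :: int poly)"
proof -
  have "bier_nverts n F \<in> {0..n-1}" if "F \<in> bier_faces n \<Delta>" for F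
    using bier_face_card[OF that] unfolding bier_nverts_def by auto
  then have "(\<Sum>F\<in>bier_faces n \<Delta>. [:-1, 1:] ^ (n - 1 - bier_nverts n F) :: int poly)
      = (\<Sum>j=0..n-1. \<Sum>F\<in>{F\<in>bier_faces n \<Delta>. bier_nverts n F = j}. [:-1, 1:] ^ (n - 1 - bier_nverts n F))"
    by (intro sum.group[symmetric] finite_bier_faces) auto
  then show ?thesis
    unfolding bier_h_poly_def bier_f_def by (simp add: of_nat_poly)
qed

lemma mult_bier_h_poly:
  assumes \<Delta>: "\<Delta> \<subseteq> Pow {1..n}" and down_closed: "\<And>A B. A \<in> \<Delta> \<Longrightarrow> B \<subseteq> A \<Longrightarrow> B \<in> \<Delta>"
  shows "[:-1, 1:] * bier_h_poly n \<Delta> = (\<Sum>B\<in>\<Delta>. monom 1 (n - card B)) - (\<Sum>C\<in>\<Delta>. monom 1 (card C))"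
proof -
  let ?y = "[:-1, 1:] :: int poly"
  have fin_\<Delta>: "finite \<Delta>"
    using \<Delta> by (rule finite_subset) simp
  have "?y * bier_h_poly n \<Delta> = (\<Sum>F\<in>bier_faces n \<Delta>. ?y ^ card (snd F - fst F))"
    unfolding bier_h_poly_eq_sum_faces sum_distrib_left
  proof (rule sum.cong)
    fix F assume F: "F \<in> bier_faces n \<Delta>"
    then obtain B C where "F = (B, C)" and "B \<subset> C" and "C \<subseteq> {1..n}"
      unfolding bier_faces_def by auto
    then have "fst F \<subseteq> snd F" and "finite (fst F)"
      using finite_subset[of B "{1..n}"] by auto
    then have "Suc (n - 1 - bier_nverts n F) = card (snd F - fst F)"
      using bier_face_card[OF F] by (simp add: bier_nverts_def card_Diff_subset)
    then show "?y * ?y ^ (n - 1 - bier_nverts n F) = ?y ^ card (snd F - fst F)"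
      by (metis power_Suc)
  qed simp
  also have "\<dots> = (\<Sum>B\<in>\<Delta>. \<Sum>C \<in> {C. B \<subseteq> C \<and> C \<subseteq> {1..n}} - \<Delta>. ?y ^ card (C - B))"
    unfolding bier_faces_eq_Sigma[OF \<Delta>] using fin_\<Delta>
    by (subst sum.Sigma) (auto simp: split_beta intro: finite_subset[of _ "Pow {1..n}"])
  also have "\<dots> = (\<Sum>B\<in>\<Delta>. (?y + 1) ^ card ({1..n} - B)) - (\<Sum>C\<in>\<Delta>. (?y + 1) ^ card C)"
    using \<Delta> down_closed by (intro sum_pairs_across_down_closed) auto
  also have "\<dots> = (\<Sum>B\<in>\<Delta>. monom 1 (n - card B)) - (\<Sum>C\<in>\<Delta>. monom 1 (card C))"
  proof -
    have "?y + 1 = [:0, 1:]"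
      by (simp add: one_pCons)
    moreover have "card ({1..n} - B) = n - card B" if "B \<in> \<Delta>" for B
      using that \<Delta> by (subst card_Diff_subset) (auto intro: rev_finite_subset)
    ultimately show ?thesis
      by (simp add: monom_altdef)
  qed
  finally show ?thesis .
qed

lemma coeff_sum_monom_card:
  assumes "finite \<Delta>"
  shows "coeff (\<Sum>A\<in>\<Delta>. monom 1 (card A)) k = int (ideal_f \<Delta> k)"
  using assms unfolding ideal_f_def coeff_sum coeff_monom
  by (simp add: sum.If_cases Int_def conj_commute)

lemma coeff_sum_monom_card_compl:
  assumes \<Delta>: "\<Delta> \<subseteq> Pow {1..n}" and "i \<le> n"
  shows "coeff (\<Sum>B\<in>\<Delta>. monom 1 (n - card B)) (n - i) = int (ideal_f \<Delta> i)"
proof -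
  have "n - card B = n - i \<longleftrightarrow> card B = i" if "B \<in> \<Delta>" for B
  proof -
    have "B \<subseteq> {1..n}"
      using that \<Delta> by blast
    then have "card B \<le> n"
      using card_mono[of "{1..n}" B] by simp
    with \<open>i \<le> n\<close> show ?thesis
      by linarith
  qed
  then have "coeff (\<Sum>B\<in>\<Delta>. monom 1 (n - card B)) (n - i) = coeff (\<Sum>B\<in>\<Delta>. monom 1 (card B)) i"
    unfolding coeff_sum coeff_monom by (intro sum.cong) auto
  also have "\<dots> = int (ideal_f \<Delta> i)"
    using finite_subset[OF \<Delta>] by (simp add: coeff_sum_monom_card)
  finally show ?thesis .
qed

theorem bier_g_eq_ideal_f_diff:
  assumes "1 \<le> n" and "proper_ideal n \<Delta>" and "i \<le> n - 1"
  shows "bier_g n \<Delta> i = int (ideal_f \<Delta> i) - int (ideal_f \<Delta> (n - i))"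
proof -
  have \<Delta>: "\<Delta> \<subseteq> Pow {1..n}" and down_closed: "\<And>A B. A \<in> \<Delta> \<Longrightarrow> B \<subseteq> A \<Longrightarrow> B \<in> \<Delta>"
    using assms(2) unfolding proper_ideal_def by auto
  have "bier_g n \<Delta> i = coeff ([:-1, 1:] * bier_h_poly n \<Delta>) (n - i)"
    using assms(1,3) by (rule bier_g_eq_coeff)
  also have "\<dots> = coeff (\<Sum>B\<in>\<Delta>. monom 1 (n - card B)) (n - i) - coeff (\<Sum>C\<in>\<Delta>. monom 1 (card C)) (n - i)"
    by (simp only: mult_bier_h_poly[OF \<Delta> down_closed] coeff_diff)
  also have "\<dots> = int (ideal_f \<Delta> i) - int (ideal_f \<Delta> (n - i))"
  proof -
    have "finite \<Delta>"
      using \<Delta> by (rule finite_subset) simp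
    then show ?thesis
      using \<Delta> assms(3) by (simp add: coeff_sum_monom_card_compl coeff_sum_monom_card)
  qed
  finally show ?thesis .
qed

theorem theorem9:
  fixes n :: nat and \<Delta> :: "nat set set"
  assumes "n \<ge> 2" and "proper_ideal n \<Delta>"
  shows "\<forall>i \<le> (n - 1) div 2. bier_g n \<Delta> i = int (ideal_f \<Delta> i) - int (ideal_f \<Delta> (n - i))"
proof (intro allI impI)
  fix i assume "i \<le> (n - 1) div 2"
  then show "bier_g n \<Delta> i = int (ideal_f \<Delta> i) - int (ideal_f \<Delta> (n - i))"
    using assms by (intro bier_g_eq_ideal_f_diff) auto
qed

end
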